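(* Let $a,b\in\mathbb{R}\setminus\{0\}$. The assignment $k\mapsto aK+bL$, $k^{-1}\mapsto a^{-1}\overline{K}+b^{-1}\overline{L}$ extends to a unital algebra homomorphism $\Phi^{(a,b)}_{\mathcal{H}}:\mathcal{H}_0\to\mathcal{H}$, and this homomorphism is injective.
   Context: $\mathcal{H}_0=\mathcal{H}_0(\mathbf{1},k,k^{-1})$ is the unital $\mathbb{C}$-algebra generated by $k,k^{-1}$ with relations $kk^{-1}=k^{-1}k=\mathbf{1}$ (the Laurent polynomial algebra in $k$). $\mathcal{H}=\mathcal{H}(\mathbf{1},K,\overline{K},L,\overline{L})$ denotes the unital associative $\mathbb{C}$-algebra generated by $K,\overline{K},L,\overline{L}$ subject to the relations $K\overline{K}K=K$, $\overline{K}K\overline{K}=\overline{K}$, $K\overline{K}=\overline{K}K$, $L\overline{L}L=L$, $\overline{L}L\overline{L}=\overline{L}$, $L\overline{L}=\overline{L}L$, and $P+Q=\mathbf{1}$, where $P:=K\overline{K}$ and $Q:=L\overline{L}$. *)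

theory Defs
  imports Complex_Main
begin

text \<open>Free unital associative complex algebra on generators of type 'g:
  noncommutative polynomials = finitely supported functions on words.\<close>

type_synonym 'g fa = "'g list \<Rightarrow> complex"

definition FA :: "'g fa set" where
  "FA = {f. finite {w. f w \<noteq> 0}}"

definition fa_zero :: "'g fa" where "fa_zero = (\<lambda>w. 0)"
definition fa_one :: "'g fa" where "fa_one = (\<lambda>w. if w = [] then 1 else 0)"
definition fa_gen :: "'g \<Rightarrow> 'g fa" where "fa_gen x = (\<lambda>w. if w = [x] then 1 else 0)"
definition fa_add :: "'g fa \<Rightarrow> 'g fa \<Rightarrow> 'g fa" where "fa_add f g = (\<lambda>w. f w + g w)"
definition fa_diff :: "'g fa \<Rightarrow> 'g fa \<Rightarrow> 'g fa" where "fa_diff f g = (\<lambda>w. f w - g w)"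
definition fa_smult :: "complex \<Rightarrow> 'g fa \<Rightarrow> 'g fa" where "fa_smult c f = (\<lambda>w. c * f w)"
definition fa_mult :: "'g fa \<Rightarrow> 'g fa \<Rightarrow> 'g fa" where
  "fa_mult f g = (\<lambda>w. \<Sum>i\<le>length w. f (take i w) * g (drop i w))"

inductive_set fa_ideal :: "'g fa set \<Rightarrow> 'g fa set" for R where
  gen: "r \<in> R \<Longrightarrow> r \<in> fa_ideal R"
| zero: "fa_zero \<in> fa_ideal R"
| add: "x \<in> fa_ideal R \<Longrightarrow> y \<in> fa_ideal R \<Longrightarrow> fa_add x y \<in> fa_ideal R"
| smult: "x \<in> fa_ideal R \<Longrightarrow> fa_smult c x \<in> fa_ideal R"
| mult: "x \<in> fa_ideal R \<Longrightarrow> u \<in> FA \<Longrightarrow> v \<in> FA \<Longrightarrow> fa_mult (fa_mult u x) v \<in> fa_ideal R"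

datatype gen0 = Gk | Gkinv

definition H0_rels :: "gen0 fa set" where
  "H0_rels = { fa_diff (fa_mult (fa_gen Gk) (fa_gen Gkinv)) fa_one,
               fa_diff (fa_mult (fa_gen Gkinv) (fa_gen Gk)) fa_one }"

definition H0_ideal :: "gen0 fa set" where "H0_ideal = fa_ideal H0_rels"

datatype gen = GK | GKb | GL | GLb

definition H_rels :: "gen fa set" where
  "H_rels = (let K = fa_gen GK; Kb = fa_gen GKb; L = fa_gen GL; Lb = fa_gen GLb;
                 P = fa_mult K Kb; Q = fa_mult L Lb in
     { fa_diff (fa_mult (fa_mult K Kb) K) K,
       fa_diff (fa_mult (fa_mult Kb K) Kb) Kb,
       fa_diff (fa_mult K Kb) (fa_mult Kb K),
       fa_diff (fa_mult (fa_mult L Lb) L) L,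
       fa_diff (fa_mult (fa_mult Lb L) Lb) Lb,
       fa_diff (fa_mult L Lb) (fa_mult Lb L),
       fa_diff (fa_add P Q) fa_one })"

definition H_ideal :: "gen fa set" where "H_ideal = fa_ideal H_rels"

text \<open>A map between free algebras inducing a unital algebra homomorphism
  between the quotients FA/I and FA/J (everything required modulo J).\<close>
definition quot_alg_hom :: "'g fa set \<Rightarrow> 'h fa set \<Rightarrow> ('g fa \<Rightarrow> 'h fa) \<Rightarrow> bool" where
  "quot_alg_hom I J \<Phi> \<longleftrightarrow>
     (\<forall>x\<in>FA. \<Phi> x \<in> FA) \<and>
     (\<forall>x\<in>FA. \<forall>y\<in>FA. fa_diff x y \<in> I \<longrightarrow> fa_diff (\<Phi> x) (\<Phi> y) \<in> J) \<and>
     (\<forall>x\<in>FA. \<forall>y\<in>FA. fa_diff (\<Phi> (fa_add x y)) (fa_add (\<Phi> x) (\<Phi> y)) \<in> J) \<and>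
     (\<forall>c. \<forall>x\<in>FA. fa_diff (\<Phi> (fa_smult c x)) (fa_smult c (\<Phi> x)) \<in> J) \<and>
     (\<forall>x\<in>FA. \<forall>y\<in>FA. fa_diff (\<Phi> (fa_mult x y)) (fa_mult (\<Phi> x) (\<Phi> y)) \<in> J) \<and>
     fa_diff (\<Phi> fa_one) fa_one \<in> J"

definition quot_inj :: "'g fa set \<Rightarrow> 'h fa set \<Rightarrow> ('g fa \<Rightarrow> 'h fa) \<Rightarrow> bool" where
  "quot_inj I J \<Phi> \<longleftrightarrow>
     (\<forall>x\<in>FA. \<forall>y\<in>FA. fa_diff (\<Phi> x) (\<Phi> y) \<in> J \<longrightarrow> fa_diff x y \<in> I)"

end

theory Submission
  imports Defs "HOL-Library.Poly_Mapping"
begin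

(*
  Both algebras are quotients of free algebras.  A map of generators extends to a substitution
  homomorphism of free algebras, and it induces a homomorphism of the quotients as soon as it
  sends every defining relation into the target ideal.  For Phi this holds because the relations
  of H make P = K Kbar and Q = L Lbar complementary idempotents, which forces the cross terms
  K Lbar, L Kbar, Kbar L, Lbar K to vanish.  Injectivity comes from an explicit left inverse:
  Psi(K) = a\<inverse>k, Psi(Kbar) = a k\<inverse>, Psi(L) = Psi(Lbar) = 0 respects the relations of H
  (it sends P to 1 and Q to 0) and Psi o Phi fixes k and k\<inverse>.
*)

datatype 'g word = Word (letters: "'g list")

instantiation word :: (type) monoid_add
begin
definition zero_word_def: "0 = Word []"
definition plus_word_def: "u + v = Word (letters u @ letters v)"
instance by standard (auto simp: zero_word_def plus_word_def)
end

lemma Word_plus [simp]: "Word xs + Word ys = Word (xs @ ys)"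
  by (simp add: plus_word_def)

lemma plus_eq_Word_iff:
  "u + v = Word l \<longleftrightarrow> (\<exists>i\<le>length l. u = Word (take i l) \<and> v = Word (drop i l))"
proof (cases u, cases v)
  fix xs ys assume uv: "u = Word xs" "v = Word ys"
  have "xs @ ys = l \<longleftrightarrow> (\<exists>i\<le>length l. xs = take i l \<and> ys = drop i l)"
    by (metis append_eq_conv_conj append_take_drop_id length_append le_add1 length_take min_def)
  then show ?thesis using uv by simp
qed

(* Noncommutative polynomials: finitely supported coefficient functions on words; the
   Poly_Mapping library makes them a ring with the convolution (Cauchy) product. *)

type_synonym ('g, 'r) ncpoly = "'g word \<Rightarrow>\<^sub>0 'r"

lemma poly_mapping_expand:
  fixes p :: "'a \<Rightarrow>\<^sub>0 'b::comm_monoid_add"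
  shows "p = (\<Sum>k\<in>Poly_Mapping.keys p. Poly_Mapping.single k (Poly_Mapping.lookup p k))"
  by (rule poly_mapping_eqI) (simp add: lookup_sum lookup_single when_def in_keys_iff)

lemma poly_mapping_induct [case_names zero single add]:
  fixes p :: "'a \<Rightarrow>\<^sub>0 'b::comm_monoid_add"
  assumes "P 0" and "\<And>k c. P (Poly_Mapping.single k c)"
    and "\<And>p q. P p \<Longrightarrow> P q \<Longrightarrow> P (p + q)"
  shows "P p"
proof -
  have "P (\<Sum>k\<in>S. Poly_Mapping.single k (Poly_Mapping.lookup p k))" if "finite S" for S
    using that by (induction S rule: finite_induct) (simp_all add: assms)
  then show ?thesis
    by (subst poly_mapping_expand) simp
qed

definition scalar :: "'r \<Rightarrow> ('g, 'r::comm_ring_1) ncpoly" where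
  "scalar c = Poly_Mapping.single 0 c"

abbreviation var :: "'g \<Rightarrow> ('g, 'r::comm_ring_1) ncpoly" where
  "var x \<equiv> Poly_Mapping.single (Word [x]) 1"

lemma scalar_1 [simp]: "scalar 1 = 1"
  by (simp add: scalar_def)

lemma scalar_0 [simp]: "scalar 0 = 0"
  by (simp add: scalar_def)

lemma scalar_add: "scalar (c + d) = scalar c + scalar d"
  by (simp add: scalar_def single_add)

lemma scalar_scalar [simp]: "scalar c * (scalar d * p) = scalar (c * d) * p"
  by (simp add: scalar_def mult_single flip: mult.assoc)

lemma scalar_commute: "p * scalar c = scalar c * p"
  by (induction p rule: poly_mapping_induct)
    (simp_all add: scalar_def mult_single distrib_left distrib_right mult.commute)

(* Moving scalars to the front; only the instance for letters is a terminating simp rule. *)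
lemma mult_scalar_left: "p * (scalar c * q) = scalar c * (p * q)"
  by (simp add: scalar_commute flip: mult.assoc)

lemma var_mult_scalar [simp]: "var x * (scalar c * p) = scalar c * (var x * p)"
  by (rule mult_scalar_left)

(* The free algebra FA (finitely supported functions on lists) is the same object:
   fa_of and ncp_of are mutually inverse on FA and turn the fa_ operations into ring operations. *)

definition ncp_of :: "'g fa \<Rightarrow> ('g, complex) ncpoly" where
  "ncp_of f = Abs_poly_mapping (\<lambda>w. f (letters w))"

definition fa_of :: "('g, complex) ncpoly \<Rightarrow> 'g fa" where
  "fa_of p = (\<lambda>l. Poly_Mapping.lookup p (Word l))"

lemma fa_of_in_FA [simp]: "fa_of p \<in> FA"
proof -
  have "{l. Poly_Mapping.lookup p (Word l) \<noteq> 0} \<subseteq> letters ` Poly_Mapping.keys p"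
    by (auto simp: image_iff) (metis in_keys_iff word.sel)
  then show ?thesis
    unfolding FA_def fa_of_def by (auto intro: finite_subset)
qed

(* ncp_of f is a well-defined polynomial exactly because f has finite support. *)
lemma lookup_ncp_of:
  assumes "f \<in> FA" shows "Poly_Mapping.lookup (ncp_of f) w = f (letters w)"
proof -
  have "{w. f (letters w) \<noteq> 0} = Word ` {l. f l \<noteq> 0}"
    by (auto simp: image_iff) (metis word.collapse)
  then have "finite {w. f (letters w) \<noteq> 0}"
    using assms by (simp add: FA_def)
  then show ?thesis by (simp add: ncp_of_def)
qed

lemma fa_of_ncp_of [simp]: "f \<in> FA \<Longrightarrow> fa_of (ncp_of f) = f"
  by (simp add: fa_of_def lookup_ncp_of)

lemma ncp_of_fa_of [simp]: "ncp_of (fa_of p) = p"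
  by (rule poly_mapping_eqI) (simp add: lookup_ncp_of[OF fa_of_in_FA], simp add: fa_of_def)

lemma FA_iff: "f \<in> FA \<longleftrightarrow> (\<exists>p. f = fa_of p)"
  by (metis fa_of_in_FA fa_of_ncp_of)

lemma fa_zero_eq: "fa_zero = fa_of 0"
  by (simp add: fa_zero_def fa_of_def fun_eq_iff)

lemma fa_one_eq: "fa_one = fa_of 1"
  by (simp add: fa_one_def fa_of_def fun_eq_iff lookup_one zero_word_def when_def)

lemma fa_gen_eq: "fa_gen x = fa_of (var x)"
  by (simp add: fa_gen_def fa_of_def fun_eq_iff lookup_single when_def)

lemma fa_add_fa_of: "fa_add (fa_of p) (fa_of q) = fa_of (p + q)"
  by (simp add: fa_add_def fa_of_def fun_eq_iff lookup_add)

lemma fa_diff_fa_of: "fa_diff (fa_of p) (fa_of q) = fa_of (p - q)"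
  by (simp add: fa_diff_def fa_of_def fun_eq_iff lookup_minus)

lemma fa_smult_fa_of: "fa_smult c (fa_of p) = fa_of (scalar c * p)"
  by (simp add: fa_smult_def fa_of_def fun_eq_iff map.rep_eq when_def scalar_def
      flip: mult_map_scale_conv_mult)

lemma lookup_mult_Word:
  "Poly_Mapping.lookup (p * q) (Word l) =
     (\<Sum>i\<le>length l. Poly_Mapping.lookup p (Word (take i l)) * Poly_Mapping.lookup q (Word (drop i l)))"
proof -
  let ?pre = "\<lambda>i. Word (take i l)" and ?suf = "\<lambda>m. Word (drop (length (letters m)) l)"
  have split: "(\<Sum>n. Poly_Mapping.lookup q n when Word l = m + n) =
      (Poly_Mapping.lookup q (?suf m) when m \<in> ?pre ` {..length l})" for m
  proof -
    have "Word l = m + n \<longleftrightarrow> m \<in> ?pre ` {..length l} \<and> n = ?suf m" for n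
      unfolding eq_commute[of "Word l"] plus_eq_Word_iff by (auto simp: min_def)
    then show ?thesis by (simp add: when_def)
  qed
  have "Poly_Mapping.lookup (p * q) (Word l) =
      (\<Sum>m. Poly_Mapping.lookup p m * Poly_Mapping.lookup q (?suf m) when m \<in> ?pre ` {..length l})"
    by (simp add: lookup_mult split mult_when)
  also have "\<dots> = (\<Sum>m\<in>?pre ` {..length l}. Poly_Mapping.lookup p m * Poly_Mapping.lookup q (?suf m))"
    by (subst Sum_any.expand_superset[of "?pre ` {..length l}"]) (auto simp: when_def)
  also have "\<dots> = (\<Sum>i\<le>length l. Poly_Mapping.lookup p (?pre i) * Poly_Mapping.lookup q (Word (drop i l)))"
  proof (subst sum.reindex)
    show "inj_on ?pre {..length l}"
      by (rule inj_onI, drule arg_cong[where f="\<lambda>w. length (letters w)"], simp)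
  qed (rule sum.cong, simp_all add: min_def)
  finally show ?thesis .
qed

lemma fa_mult_fa_of: "fa_mult (fa_of p) (fa_of q) = fa_of (p * q)"
  by (simp add: fa_mult_def fa_of_def fun_eq_iff lookup_mult_Word)

definition subst_word :: "('g \<Rightarrow> ('h, 'r::comm_ring_1) ncpoly) \<Rightarrow> 'g word \<Rightarrow> ('h, 'r) ncpoly" where
  "subst_word G w = prod_list (map G (letters w))"

definition subst :: "('g \<Rightarrow> ('h, 'r::comm_ring_1) ncpoly) \<Rightarrow> ('g, 'r) ncpoly \<Rightarrow> ('h, 'r) ncpoly" where
  "subst G p = (\<Sum>k\<in>Poly_Mapping.keys p. scalar (Poly_Mapping.lookup p k) * subst_word G k)"

lemma subst_word_plus: "subst_word G (u + v) = subst_word G u * subst_word G v"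
  by (simp add: subst_word_def plus_word_def)

lemma subst_word_0 [simp]: "subst_word G 0 = 1"
  by (simp add: subst_word_def zero_word_def)

lemma subst_word_letter [simp]: "subst_word G (Word [x]) = G x"
  by (simp add: subst_word_def)

lemma subst_0 [simp]: "subst G 0 = 0"
  by (simp add: subst_def)

lemma subst_single [simp]: "subst G (Poly_Mapping.single k c) = scalar c * subst_word G k"
  by (simp add: subst_def)

lemma subst_add [simp]: "subst G (p + q) = subst G p + subst G q"
  unfolding subst_def
  by (rule setsum_keys_plus_distrib) (simp_all add: scalar_add distrib_right)

lemma subst_minus [simp]: "subst G (p - q) = subst G p - subst G q"
  by (metis add_diff_cancel_right' diff_add_cancel subst_add)

lemma subst_scalar_const [simp]: "subst G (scalar c) = scalar c"
  by (simp add: scalar_def)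

lemma subst_one [simp]: "subst G 1 = 1"
  using subst_scalar_const[of G 1] by simp

lemma subst_mult [simp]: "subst G (p * q) = subst G p * subst G q"
proof (induction p rule: poly_mapping_induct)
  case (single k c)
  show ?case
  proof (induction q rule: poly_mapping_induct)
    case (single l d)
    have "scalar (c * d) * (subst_word G k * subst_word G l)
        = scalar c * subst_word G k * (scalar d * subst_word G l)"
      by (simp add: mult_scalar_left[of "subst_word G k"] mult.assoc)
    then show ?case
      by (simp add: mult_single subst_word_plus)
  qed (simp_all add: distrib_left)
qed (simp_all add: distrib_right)

lemma subst_prod_list: "subst G (prod_list ps) = prod_list (map (subst G) ps)"
  by (induction ps) simp_all

lemma subst_subst: "subst G' (subst G p) = subst (\<lambda>x. subst G' (G x)) p"
  by (induction p rule: poly_mapping_induct) (simp_all add: subst_word_def subst_prod_list comp_def)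

lemma subst_var_id: "subst var p = p"
proof (induction p rule: poly_mapping_induct)
  case (single k c)
  have word: "subst_word var (Word l) = Poly_Mapping.single (Word l) 1" for l
  proof (induction l)
    case Nil
    show ?case by (simp flip: zero_word_def)
  next
    case (Cons x l)
    then show ?case by (simp add: subst_word_def mult_single)
  qed
  show ?case
    by (cases k) (simp add: word scalar_def mult_single)
qed simp_all

locale ring_ideal =
  fixes I :: "'a::ring_1 set"
  assumes zero_mem: "0 \<in> I"
    and add_mem: "x \<in> I \<Longrightarrow> y \<in> I \<Longrightarrow> x + y \<in> I"
    and mult_mem: "x \<in> I \<Longrightarrow> u * x * v \<in> I"
begin

definition congr_mod :: "'a \<Rightarrow> 'a \<Rightarrow> bool" where
  "congr_mod x y \<longleftrightarrow> x - y \<in> I"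

lemma uminus_mem: "x \<in> I \<Longrightarrow> - x \<in> I"
  using mult_mem[of x "-1" 1] by simp

lemma congr_mod_refl [simp]: "congr_mod x x"
  by (simp add: congr_mod_def zero_mem)

lemma congr_mod_sym: "congr_mod x y \<Longrightarrow> congr_mod y x"
  unfolding congr_mod_def by (metis uminus_mem minus_diff_eq)

lemma congr_mod_trans [trans]: "congr_mod x y \<Longrightarrow> congr_mod y z \<Longrightarrow> congr_mod x z"
  unfolding congr_mod_def using add_mem[of "x - y" "y - z"] by simp

lemma congr_mod_add: "congr_mod x x' \<Longrightarrow> congr_mod y y' \<Longrightarrow> congr_mod (x + y) (x' + y')"
  unfolding congr_mod_def by (metis add_mem add_diff_add)

lemma congr_mod_diff: "congr_mod x x' \<Longrightarrow> congr_mod y y' \<Longrightarrow> congr_mod (x - y) (x' - y')"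
proof -
  have "x - y - (x' - y') = (x - x') + - (y - y')"
    by (simp add: algebra_simps)
  then show "congr_mod x x' \<Longrightarrow> congr_mod y y' \<Longrightarrow> congr_mod (x - y) (x' - y')"
    unfolding congr_mod_def by (metis add_mem uminus_mem)
qed

lemma congr_mod_mult: "congr_mod x x' \<Longrightarrow> congr_mod y y' \<Longrightarrow> congr_mod (x * y) (x' * y')"
proof -
  assume "congr_mod x x'" "congr_mod y y'"
  then have "1 * (x - x') * y \<in> I" "x' * (y - y') * 1 \<in> I"
    unfolding congr_mod_def by (blast intro: mult_mem)+
  moreover have "x * y - x' * y' = 1 * (x - x') * y + x' * (y - y') * 1"
    by (simp add: algebra_simps)
  ultimately show ?thesis
    unfolding congr_mod_def by (metis add_mem)
qed

(* If k, kb are mutually regular and commute (likewise l, lb), and P = k kb, Q = l lb satisfy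
   P + Q = 1, then P and Q are orthogonal idempotents, so k = k P and lb = Q lb give
   k lb = k P Q lb = 0; similarly kb = kb P and l = Q l give kb l = 0. *)
lemma complementary_idempotents_orthogonal:
  assumes k: "congr_mod (k * kb * k) k" "congr_mod (kb * k * kb) kb" "congr_mod (kb * k) (k * kb)"
    and l: "congr_mod (l * lb * l) l" "congr_mod (lb * l * lb) lb" "congr_mod (lb * l) (l * lb)"
    and complementary: "congr_mod (k * kb + l * lb) 1"
  shows "congr_mod (k * lb) 0" and "congr_mod (kb * l) 0"
proof -
  define P Q where "P = k * kb" and "Q = l * lb"
  have P_idem: "congr_mod (P * P) P"
  proof -
    have "P * P = (k * kb * k) * kb" by (simp add: P_def mult.assoc)
    also have "congr_mod \<dots> (k * kb)" by (intro congr_mod_mult congr_mod_refl k(1))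
    finally show ?thesis by (simp add: P_def)
  qed
  have PQ: "congr_mod (P * Q) 0"
  proof -
    have "Q = (P + Q) - P" by simp
    also have "congr_mod \<dots> (1 - P)"
      by (intro congr_mod_diff congr_mod_refl) (simp add: P_def Q_def complementary)
    finally have "congr_mod (P * Q) (P * (1 - P))" by (intro congr_mod_mult congr_mod_refl)
    also have "P * (1 - P) = P - P * P" by (simp add: algebra_simps)
    also have "congr_mod \<dots> (P - P)" by (intro congr_mod_diff congr_mod_refl P_idem)
    finally show ?thesis by simp
  qed
  have k_P: "congr_mod k (k * P)"
  proof -
    have "congr_mod k (k * (kb * k))" using congr_mod_sym[OF k(1)] by (simp add: mult.assoc)
    also have "congr_mod \<dots> (k * P)" by (unfold P_def, intro congr_mod_mult congr_mod_refl k(3))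
    finally show ?thesis .
  qed
  have Q_lb: "congr_mod lb (Q * lb)"
  proof -
    have "congr_mod lb ((lb * l) * lb)" using congr_mod_sym[OF l(2)] .
    also have "congr_mod \<dots> (Q * lb)" by (unfold Q_def, intro congr_mod_mult congr_mod_refl l(3))
    finally show ?thesis .
  qed
  have kb_P: "congr_mod kb (kb * P)"
    using congr_mod_sym[OF k(2)] by (simp add: P_def mult.assoc)
  have Q_l: "congr_mod l (Q * l)"
    using congr_mod_sym[OF l(1)] by (simp add: Q_def)
  have "congr_mod (k * lb) ((k * P) * (Q * lb))" by (intro congr_mod_mult k_P Q_lb)
  also have "(k * P) * (Q * lb) = k * (P * Q) * lb" by (simp add: mult.assoc)
  also have "congr_mod \<dots> (k * 0 * lb)" by (intro congr_mod_mult congr_mod_refl PQ)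
  finally show "congr_mod (k * lb) 0" by simp
  have "congr_mod (kb * l) ((kb * P) * (Q * l))" by (intro congr_mod_mult kb_P Q_l)
  also have "(kb * P) * (Q * l) = kb * (P * Q) * l" by (simp add: mult.assoc)
  also have "congr_mod \<dots> (kb * 0 * l)" by (intro congr_mod_mult congr_mod_refl PQ)
  finally show "congr_mod (kb * l) 0" by simp
qed

end

definition ideal_of :: "'g fa set \<Rightarrow> ('g, complex) ncpoly set" where
  "ideal_of R = {p. fa_of p \<in> fa_ideal R}"

lemma ring_ideal_ideal_of: "ring_ideal (ideal_of R)"
proof
  show "0 \<in> ideal_of R"
    using fa_ideal.zero[of R] by (simp add: ideal_of_def fa_zero_eq)
  show "p + q \<in> ideal_of R" if "p \<in> ideal_of R" "q \<in> ideal_of R" for p q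
    using fa_ideal.add[of "fa_of p" R "fa_of q"] that by (simp add: ideal_of_def fa_add_fa_of)
  show "u * p * v \<in> ideal_of R" if "p \<in> ideal_of R" for p u v
    using fa_ideal.mult[of "fa_of p" R "fa_of u" "fa_of v"] that by (simp add: ideal_of_def fa_mult_fa_of)
qed

interpretation ideal_of: ring_ideal "ideal_of R" for R
  by (rule ring_ideal_ideal_of)

lemma relation_congr_mod: "fa_of (x - y) \<in> R \<Longrightarrow> ideal_of.congr_mod R x y"
  by (simp only: ideal_of.congr_mod_def) (simp add: ideal_of_def fa_ideal.gen)

lemma fa_ideal_FA:
  assumes "R \<subseteq> FA" and "z \<in> fa_ideal R"
  shows "z \<in> FA"
  using assms(2)
  by (induction z rule: fa_ideal.induct)
    (use assms(1) in \<open>auto simp: FA_iff fa_zero_eq fa_add_fa_of fa_smult_fa_of fa_mult_fa_of\<close>)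

lemma subst_ideal:
  assumes "R \<subseteq> FA" and relations: "\<And>r. r \<in> R \<Longrightarrow> subst G (ncp_of r) \<in> ideal_of R'"
    and "p \<in> ideal_of R"
  shows "subst G p \<in> ideal_of R'"
proof -
  have "subst G (ncp_of z) \<in> ideal_of R'" if "z \<in> fa_ideal R" for z
    using that
  proof (induction z rule: fa_ideal.induct)
    case (gen r)
    then show ?case by (rule relations)
  next
    case zero
    then show ?case by (simp add: fa_zero_eq ideal_of.zero_mem)
  next
    case (add x y)
    then obtain x' y' where "x = fa_of x'" "y = fa_of y'"
      using fa_ideal_FA[OF \<open>R \<subseteq> FA\<close>] FA_iff by blast
    with add show ?case by (simp add: fa_add_fa_of ideal_of.add_mem)
  next
    case (smult x c)
    then obtain x' where "x = fa_of x'"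
      using fa_ideal_FA[OF \<open>R \<subseteq> FA\<close>] FA_iff by blast
    with smult show ?case
      using ideal_of.mult_mem[of _ R' "scalar c" 1] by (simp add: fa_smult_fa_of)
  next
    case (mult x u v)
    then obtain x' u' v' where "x = fa_of x'" "u = fa_of u'" "v = fa_of v'"
      using fa_ideal_FA[OF \<open>R \<subseteq> FA\<close>] FA_iff by blast
    with mult show ?case by (simp add: fa_mult_fa_of ideal_of.mult_mem)
  qed
  from this[of "fa_of p"] \<open>p \<in> ideal_of R\<close> show ?thesis by (simp add: ideal_of_def)
qed

definition induced :: "('g \<Rightarrow> ('h, complex) ncpoly) \<Rightarrow> 'g fa \<Rightarrow> 'h fa" where
  "induced G f = fa_of (subst G (ncp_of f))"

(* The homomorphism laws hold exactly on representatives; equal elements are congruent. *)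
lemma fa_diff_self: "fa_diff f f \<in> fa_ideal R"
  using fa_ideal.zero by (simp add: fa_diff_def fa_zero_def)

lemma induced_quot_alg_hom:
  fixes G :: "'g \<Rightarrow> ('h, complex) ncpoly"
  assumes "R \<subseteq> FA" and relations: "\<And>r. r \<in> R \<Longrightarrow> subst G (ncp_of r) \<in> ideal_of R'"
  shows "quot_alg_hom (fa_ideal R) (fa_ideal R') (induced G)"
  unfolding quot_alg_hom_def
proof (intro conjI ballI allI impI)
  fix x y :: "'g fa" assume "x \<in> FA" "y \<in> FA"
  then obtain p q where pq: "x = fa_of p" "y = fa_of q" by (auto simp: FA_iff)
  show "fa_diff (induced G (fa_add x y)) (fa_add (induced G x) (induced G y)) \<in> fa_ideal R'"
    by (simp add: pq induced_def fa_add_fa_of fa_diff_self)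
  show "fa_diff (induced G (fa_mult x y)) (fa_mult (induced G x) (induced G y)) \<in> fa_ideal R'"
    by (simp add: pq induced_def fa_mult_fa_of fa_diff_self)
  assume "fa_diff x y \<in> fa_ideal R"
  then have "p - q \<in> ideal_of R" by (simp add: pq ideal_of_def fa_diff_fa_of)
  then have "subst G p - subst G q \<in> ideal_of R'"
    using subst_ideal[OF assms] by (metis subst_minus)
  then show "fa_diff (induced G x) (induced G y) \<in> fa_ideal R'"
    by (simp add: pq induced_def ideal_of_def fa_diff_fa_of)
next
  fix c and x :: "'g fa" assume "x \<in> FA"
  then obtain p where "x = fa_of p" by (auto simp: FA_iff)
  then show "fa_diff (induced G (fa_smult c x)) (fa_smult c (induced G x)) \<in> fa_ideal R'"
    by (simp add: induced_def fa_smult_fa_of fa_diff_self)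
qed (simp_all add: induced_def fa_one_eq fa_diff_self)

lemma induced_quot_inj:
  fixes G :: "'g \<Rightarrow> ('h, complex) ncpoly"
  assumes "R' \<subseteq> FA" and relations: "\<And>r. r \<in> R' \<Longrightarrow> subst G' (ncp_of r) \<in> ideal_of R"
    and left_inverse: "\<And>x. subst G' (G x) = var x"
  shows "quot_inj (fa_ideal R) (fa_ideal R') (induced G)"
  unfolding quot_inj_def
proof (intro ballI impI)
  fix x y :: "'g fa" assume "x \<in> FA" "y \<in> FA" "fa_diff (induced G x) (induced G y) \<in> fa_ideal R'"
  then obtain p q where pq: "x = fa_of p" "y = fa_of q"
    and "subst G (p - q) \<in> ideal_of R'"
    by (auto simp: FA_iff induced_def ideal_of_def fa_diff_fa_of)
  then have "subst G' (subst G (p - q)) \<in> ideal_of R"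
    using subst_ideal[OF assms(1,2)] by blast
  then have "p - q \<in> ideal_of R"
    by (simp only: subst_subst left_inverse subst_var_id)
  then show "fa_diff x y \<in> fa_ideal R"
    by (simp add: pq ideal_of_def fa_diff_fa_of)
qed

lemma H0_rels_eq: "H0_rels = fa_of ` {var Gk * var Gkinv - 1, var Gkinv * var Gk - 1}"
  by (simp add: H0_rels_def fa_gen_eq fa_mult_fa_of fa_diff_fa_of fa_one_eq)

lemma H_rels_eq: "H_rels = fa_of ` {var GK * var GKb * var GK - var GK, var GKb * var GK * var GKb - var GKb,
    var GK * var GKb - var GKb * var GK, var GL * var GLb * var GL - var GL,
    var GLb * var GL * var GLb - var GLb, var GL * var GLb - var GLb * var GL,
    var GK * var GKb + var GL * var GLb - 1}"
  by (simp add: H_rels_def Let_def fa_gen_eq fa_mult_fa_of fa_diff_fa_of fa_one_eq fa_add_fa_of)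

abbreviation congr_H0 :: "(gen0, complex) ncpoly \<Rightarrow> (gen0, complex) ncpoly \<Rightarrow> bool" where
  "congr_H0 \<equiv> ideal_of.congr_mod H0_rels"

abbreviation congr_H :: "(gen, complex) ncpoly \<Rightarrow> (gen, complex) ncpoly \<Rightarrow> bool" where
  "congr_H \<equiv> ideal_of.congr_mod H_rels"

lemma H_relations:
  "congr_H (var GK * var GKb * var GK) (var GK)" "congr_H (var GKb * var GK * var GKb) (var GKb)"
  "congr_H (var GKb * var GK) (var GK * var GKb)" "congr_H (var GL * var GLb * var GL) (var GL)"
  "congr_H (var GLb * var GL * var GLb) (var GLb)" "congr_H (var GLb * var GL) (var GL * var GLb)"
  "congr_H (var GK * var GKb + var GL * var GLb) 1"
  by (auto intro: relation_congr_mod ideal_of.congr_mod_sym simp only: H_rels_eq image_insert insert_iff)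

lemma H0_relations: "congr_H0 (var Gk * var Gkinv) 1" "congr_H0 (var Gkinv * var Gk) 1"
  by (auto intro: relation_congr_mod simp only: H0_rels_eq image_insert insert_iff)

lemma H_orthogonal:
  "congr_H (var GK * var GLb) 0" "congr_H (var GKb * var GL) 0"
  "congr_H (var GL * var GKb) 0" "congr_H (var GLb * var GK) 0"
proof -
  note rels = H_relations
  show "congr_H (var GK * var GLb) 0" "congr_H (var GKb * var GL) 0"
    using rels by (rule ideal_of.complementary_idempotents_orthogonal)+
  show "congr_H (var GL * var GKb) 0" "congr_H (var GLb * var GK) 0"
    using rels(4-6,1-3) rels(7)[unfolded add.commute[of "var GK * var GKb"]]
    by (rule ideal_of.complementary_idempotents_orthogonal)+
qed

definition phi_gens :: "complex \<Rightarrow> complex \<Rightarrow> gen0 \<Rightarrow> (gen, complex) ncpoly" where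
  "phi_gens a b x = (case x of
      Gk \<Rightarrow> scalar a * var GK + scalar b * var GL
    | Gkinv \<Rightarrow> scalar (inverse a) * var GKb + scalar (inverse b) * var GLb)"

definition psi_gens :: "complex \<Rightarrow> gen \<Rightarrow> (gen0, complex) ncpoly" where
  "psi_gens a x = (case x of
      GK \<Rightarrow> scalar (inverse a) * var Gk
    | GKb \<Rightarrow> scalar a * var Gkinv
    | GL \<Rightarrow> 0
    | GLb \<Rightarrow> 0)"

(* Phi(k) Phi(k\<inverse>) = K Kbar + L Lbar + (cross terms) \<equiv> P + Q \<equiv> 1, and likewise for k\<inverse> k. *)
lemma phi_respects_relations:
  assumes "a \<noteq> 0" "b \<noteq> 0" and "r \<in> H0_rels"
  shows "subst (phi_gens a b) (ncp_of r) \<in> ideal_of H_rels"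
proof -
  let ?\<phi> = "subst (phi_gens a b)"
  have "?\<phi> (var Gk * var Gkinv) = var GK * var GKb + var GL * var GLb
      + scalar (a * inverse b) * (var GK * var GLb) + scalar (b * inverse a) * (var GL * var GKb)"
    by (simp add: phi_gens_def algebra_simps assms(1,2))
  also have "congr_H \<dots> (var GK * var GKb + var GL * var GLb
      + scalar (a * inverse b) * 0 + scalar (b * inverse a) * 0)"
    by (intro ideal_of.congr_mod_add ideal_of.congr_mod_mult ideal_of.congr_mod_refl H_orthogonal)
  also have "congr_H \<dots> 1"
    using H_relations(7) by simp
  finally have k_kinv: "congr_H (?\<phi> (var Gk * var Gkinv)) 1" .
  have "?\<phi> (var Gkinv * var Gk) = var GKb * var GK + var GLb * var GL
      + scalar (inverse a * b) * (var GKb * var GL) + scalar (inverse b * a) * (var GLb * var GK)"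
    by (simp add: phi_gens_def algebra_simps assms(1,2))
  also have "congr_H \<dots> (var GK * var GKb + var GL * var GLb
      + scalar (inverse a * b) * 0 + scalar (inverse b * a) * 0)"
    by (intro ideal_of.congr_mod_add ideal_of.congr_mod_mult ideal_of.congr_mod_refl
        H_orthogonal H_relations(3,6))
  also have "congr_H \<dots> 1"
    using H_relations(7) by simp
  finally have kinv_k: "congr_H (?\<phi> (var Gkinv * var Gk)) 1" .
  from \<open>r \<in> H0_rels\<close> k_kinv kinv_k show ?thesis
    by (auto simp: H0_rels_eq ideal_of.congr_mod_def)
qed

(* Psi sends K Kbar and Kbar K to k k\<inverse> \<equiv> 1 \<equiv> k\<inverse> k and L, Lbar to 0, so every relation
   of H becomes a consequence of the relations of H_0. *)
lemma psi_respects_relations: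
  assumes "a \<noteq> 0" and "r \<in> H_rels"
  shows "subst (psi_gens a) (ncp_of r) \<in> ideal_of H0_rels"
proof -
  let ?\<psi> = "subst (psi_gens a)"
  have K_Kb: "?\<psi> (var GK * var GKb) = var Gk * var Gkinv"
    and Kb_K: "?\<psi> (var GKb * var GK) = var Gkinv * var Gk"
    by (simp_all add: psi_gens_def mult.assoc assms(1))
  have psi_P: "congr_H0 (?\<psi> (var GK * var GKb)) 1" and psi_P': "congr_H0 (?\<psi> (var GKb * var GK)) 1"
    unfolding K_Kb Kb_K by (fact H0_relations)+
  have "congr_H0 (?\<psi> (var GK * var GKb * var GK)) (1 * ?\<psi> (var GK))"
    using psi_P by (simp only: subst_mult) (intro ideal_of.congr_mod_mult ideal_of.congr_mod_refl)
  moreover have "congr_H0 (?\<psi> (var GKb * var GK * var GKb)) (1 * ?\<psi> (var GKb))"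
    using psi_P' by (simp only: subst_mult) (intro ideal_of.congr_mod_mult ideal_of.congr_mod_refl)
  moreover have "congr_H0 (?\<psi> (var GK * var GKb)) (?\<psi> (var GKb * var GK))"
    using psi_P ideal_of.congr_mod_sym[OF psi_P'] by (rule ideal_of.congr_mod_trans)
  moreover have "congr_H0 (?\<psi> (var GK * var GKb + var GL * var GLb)) (?\<psi> 1)"
    using psi_P by (simp add: psi_gens_def)
  ultimately show ?thesis
    using \<open>r \<in> H_rels\<close> by (auto simp: H_rels_eq psi_gens_def ideal_of.congr_mod_def ideal_of.zero_mem)
qed

lemma psi_phi_id:
  assumes "a \<noteq> 0"
  shows "subst (psi_gens a) (phi_gens a b x) = var x"
  using assms by (cases x) (simp_all add: phi_gens_def psi_gens_def)

lemma induced_fa_gen: "induced G (fa_gen x) = fa_of (G x)"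
  by (simp add: induced_def fa_gen_eq)

lemma fa_linear_combination:
  "fa_add (fa_smult c (fa_gen x)) (fa_smult d (fa_gen y)) = fa_of (scalar c * var x + scalar d * var y)"
  by (simp add: fa_gen_eq fa_smult_fa_of fa_add_fa_of)

theorem proposition1:
  fixes a b :: real
  assumes "a \<noteq> 0" and "b \<noteq> 0"
  shows "\<exists>\<Phi>. quot_alg_hom H0_ideal H_ideal \<Phi> \<and>
     fa_diff (\<Phi> (fa_gen Gk))
       (fa_add (fa_smult (complex_of_real a) (fa_gen GK)) (fa_smult (complex_of_real b) (fa_gen GL)))
       \<in> H_ideal \<and>
     fa_diff (\<Phi> (fa_gen Gkinv))
       (fa_add (fa_smult (complex_of_real (inverse a)) (fa_gen GKb))
               (fa_smult (complex_of_real (inverse b)) (fa_gen GLb)))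
       \<in> H_ideal \<and>
     quot_inj H0_ideal H_ideal \<Phi>"
proof (intro exI conjI)
  define G where "G = phi_gens (complex_of_real a) (complex_of_real b)"
  have nonzero: "complex_of_real a \<noteq> 0" "complex_of_real b \<noteq> 0"
    using assms by simp_all
  have H0_FA: "H0_rels \<subseteq> FA" and H_FA: "H_rels \<subseteq> FA"
    by (auto simp: H0_rels_eq H_rels_eq)
  show "quot_alg_hom H0_ideal H_ideal (induced G)"
    unfolding H0_ideal_def H_ideal_def G_def
    using H0_FA phi_respects_relations[OF nonzero] by (rule induced_quot_alg_hom)
  show "quot_inj H0_ideal H_ideal (induced G)"
    unfolding H0_ideal_def H_ideal_def G_def
    using H_FA psi_respects_relations[OF nonzero(1)] psi_phi_id[OF nonzero(1)]
    by (rule induced_quot_inj)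
  show "fa_diff (induced G (fa_gen Gk))
       (fa_add (fa_smult (complex_of_real a) (fa_gen GK)) (fa_smult (complex_of_real b) (fa_gen GL)))
       \<in> H_ideal"
    by (simp add: induced_fa_gen fa_linear_combination G_def phi_gens_def H_ideal_def fa_diff_self)
  show "fa_diff (induced G (fa_gen Gkinv))
       (fa_add (fa_smult (complex_of_real (inverse a)) (fa_gen GKb))
               (fa_smult (complex_of_real (inverse b)) (fa_gen GLb)))
       \<in> H_ideal"
    by (simp add: induced_fa_gen fa_linear_combination G_def phi_gens_def H_ideal_def fa_diff_self)
qed

end
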